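(* Assume conditions (C1) and (C3) hold, and that either (a) $A$ is $L$-Lipschitz continuous and $r$-strongly monotone and $B$ is maximal monotone, or (b) $A$ is $L$-Lipschitz continuous and monotone and $B$ is maximal monotone and $r$-strongly monotone (for some $r>0$). Then the sequence $\{x_n\}$ generated by Algorithm 3.1 converges strongly to a point $p\in\Omega$.
   Context: Let $H$ be a real Hilbert space, $A:H\to H$ a single-valued mapping and $B:H\to 2^H$ a set-valued mapping, and let $\Omega:=(A+B)^{-1}(0)=\{x\in H:\ 0\in Ax+Bx\}$. Algorithm 3.1 is the following iteration. Fix $x_0,x_1\in H$, $\mu\in(0,1)$, $\lambda_1>0$, real sequences $\{\alpha_n\},\{\beta_n\},\{\theta_n\}$ and nonnegative real sequences $\{\mu_n\},\{p_n\}$. For $n=1,2,\dots$ compute $w_n=x_n+\alpha_n(x_n-x_{n-1})$, $z_n=x_n+\beta_n(x_n-x_{n-1})$, $y_n=(I+\lambda_nB)^{-1}(I-\lambda_nA)w_n$, and set $\lambda_{n+1}=\min\{(\mu_n+\mu)\|w_n-y_n\|/\|Aw_n-Ay_n\|,\ \lambda_n+p_n\}$ if $Aw_n\neq Ay_n$, and $\lambda_{n+1}=\lambda_n+p_n$ otherwise. If $w_n=y_n$ the algorithm stops (then $y_n\in\Omega$). Otherwise set $x_{n+1}=(1-\theta_n)z_n+\theta_n\big(y_n-\lambda_n(Ay_n-Aw_n)\big)$ and continue. Here $I$ is the identity and $(I+\lambda B)^{-1}$ is the resolvent of $B$. Throughout, it is assumed that the algorithm does not stop, so that infinite sequences $\{x_n\},\{w_n\},\{z_n\},\{y_n\},\{\lambda_n\}$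 are generated. Condition (C1): $\Omega\neq\emptyset$. Condition (C3): there is $\varepsilon\in(1,\infty)$ such that (i) $0\le\alpha_n\le1$; (ii) $0\le\beta_n\le\beta_{n+1}\le\beta<\frac{3+2\varepsilon-\sqrt{8\varepsilon+17}}{2\varepsilon}$ for some constant $\beta$; (iii) $0<\theta<\theta_n\le\theta_{n+1}\le\frac{1}{1+\varepsilon}$ for some constant $\theta$; (iv) $a_n:=(1-\theta_n)\beta_n+\theta_n\alpha_n$ is non-decreasing; (v) $\sum_{n=1}^\infty p_n<\infty$ and $\lim_{n\to\infty}\mu_n=0$. A set-valued $B$ is $r$-strongly monotone if $\langle u-v,x-y\rangle\ge r\|x-y\|^2$ whenever $u\in Bx$, $v\in By$; a single-valued $A$ is $r$-strongly monotone if $\langle Ax-Ay,x-y\rangle\ge r\|x-y\|^2$ for all $x,y$. *)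

theory Defs
  imports "HOL-Analysis.Analysis"
begin

definition monotone_op :: "('a::real_inner \<Rightarrow> 'a) \<Rightarrow> bool" where
  "monotone_op A \<longleftrightarrow> (\<forall>x y. inner (A x - A y) (x - y) \<ge> 0)"

definition strongly_monotone_op :: "real \<Rightarrow> ('a::real_inner \<Rightarrow> 'a) \<Rightarrow> bool" where
  "strongly_monotone_op r A \<longleftrightarrow> (\<forall>x y. inner (A x - A y) (x - y) \<ge> r * (norm (x - y))\<^sup>2)"

definition monotone_setop :: "('a::real_inner \<Rightarrow> 'a set) \<Rightarrow> bool" where
  "monotone_setop B \<longleftrightarrow> (\<forall>x y u v. u \<in> B x \<longrightarrow> v \<in> B y \<longrightarrow> inner (u - v) (x - y) \<ge> 0)"

definition strongly_monotone_setop :: "real \<Rightarrow> ('a::real_inner \<Rightarrow> 'a set) \<Rightarrow> bool" where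
  "strongly_monotone_setop r B \<longleftrightarrow>
     (\<forall>x y u v. u \<in> B x \<longrightarrow> v \<in> B y \<longrightarrow> inner (u - v) (x - y) \<ge> r * (norm (x - y))\<^sup>2)"

definition maximal_monotone :: "('a::real_inner \<Rightarrow> 'a set) \<Rightarrow> bool" where
  "maximal_monotone B \<longleftrightarrow> monotone_setop B \<and>
     (\<forall>C. monotone_setop C \<and> (\<forall>x. B x \<subseteq> C x) \<longrightarrow> C = B)"

definition zeros_sum :: "('a::real_vector \<Rightarrow> 'a) \<Rightarrow> ('a \<Rightarrow> 'a set) \<Rightarrow> 'a set" where
  "zeros_sum A B = {x. \<exists>u \<in> B x. A x + u = 0}"

text \<open>Membership in the (set-valued) resolvent: y \<in> (I + l B)^{-1} v iff v \<in> y + l B y.\<close>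
definition in_resolvent :: "('a::real_vector \<Rightarrow> 'a set) \<Rightarrow> real \<Rightarrow> 'a \<Rightarrow> 'a \<Rightarrow> bool" where
  "in_resolvent B l v y \<longleftrightarrow> v - y \<in> (\<lambda>u. l *\<^sub>R u) ` B y"

end

theory Submission
  imports Defs
begin

(*
  Fix q \<in> \<Omega>. The step-size rule keeps \<lambda>_n bounded below and convergent, so eventually
  \<lambda>_n \<parallel>Aw_n - Ay_n\<parallel> \<le> \<kappa> \<parallel>w_n - y_n\<parallel> for a fixed \<kappa> < 1. For u_n = y_n - \<lambda>_n (Ay_n - Aw_n),
  strong monotonicity of A + B then gives the forward-backward-forward estimate
    \<parallel>u_n - q\<parallel>\<^sup>2 \<le> \<parallel>w_n - q\<parallel>\<^sup>2 - (1 - \<kappa>\<^sup>2) \<parallel>w_n - y_n\<parallel>\<^sup>2 - 2 \<lambda>_n r \<parallel>y_n - q\<parallel>\<^sup>2,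
  whose last term is what upgrades weak to strong convergence. Expanding the two inertial
  extrapolations w_n and z_n turns it into a recursion for \<parallel>x_n - q\<parallel>\<^sup>2 under which the Lyapunov
  function \<parallel>x_n - q\<parallel>\<^sup>2 - a_n \<parallel>x_(n-1) - q\<parallel>\<^sup>2 + c_n \<parallel>x_n - x_(n-1)\<parallel>\<^sup>2 decreases by
  \<gamma> \<parallel>x_(n+1) - x_n\<parallel>\<^sup>2 plus \<theta>_n times the two error terms above; the bound on \<beta> in (C3) is
  exactly what makes \<gamma> positive. Being bounded below, the Lyapunov function converges, so
  x_(n+1) - x_n, w_n - y_n and y_n - q all tend to 0, and hence x_n \<longrightarrow> q.
*)

lemma norm_convex_comb_sq:
  fixes a b :: "'a::real_inner"
  shows "norm ((1 - t) *\<^sub>R a + t *\<^sub>R b) ^ 2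
    = (1 - t) * norm a ^ 2 + t * norm b ^ 2 - t * (1 - t) * norm (a - b) ^ 2"
  by (simp add: power2_norm_eq_inner inner_commute algebra_simps)

lemma norm_sq_via_point:
  fixes a b c :: "'a::real_inner"
  shows "norm c ^ 2 = norm a ^ 2 - norm (a - b) ^ 2 + norm (c - b) ^ 2 - 2 * inner (a - c) b"
  by (simp add: power2_norm_eq_inner inner_commute algebra_simps)

lemma norm_diff_scaleR_sq_ge:
  fixes a b :: "'a::real_inner"
  assumes "0 \<le> \<beta>"
  shows "(1 - \<beta>) * norm a ^ 2 + (\<beta>\<^sup>2 - \<beta>) * norm b ^ 2 \<le> norm (a - \<beta> *\<^sub>R b) ^ 2"
proof -
  have expand: "norm (a - \<beta> *\<^sub>R b) ^ 2 = norm a ^ 2 - 2 * \<beta> * inner a b + \<beta>\<^sup>2 * norm b ^ 2"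
    by (simp add: power2_norm_eq_inner inner_commute algebra_simps power2_eq_square[of \<beta>])
  have "norm (a - b) ^ 2 = norm a ^ 2 - 2 * inner a b + norm b ^ 2"
    by (simp add: power2_norm_eq_inner inner_commute algebra_simps)
  then have "2 * inner a b \<le> norm a ^ 2 + norm b ^ 2"
    using zero_le_power2[of "norm (a - b)"] by linarith
  then have "\<beta> * (2 * inner a b) \<le> \<beta> * (norm a ^ 2 + norm b ^ 2)"
    using assms by (rule mult_left_mono)
  then show ?thesis
    unfolding expand by (simp add: algebra_simps)
qed

lemma tendsto_zero_of_norm_sq_le:
  fixes f :: "nat \<Rightarrow> 'a::real_normed_vector"
  assumes "e \<longlonglongrightarrow> 0" and "0 < c" and "eventually (\<lambda>n. c * norm (f n) ^ 2 \<le> e n) sequentially"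
  shows "f \<longlonglongrightarrow> 0"
proof -
  have "(\<lambda>n. c * norm (f n) ^ 2) \<longlonglongrightarrow> c * 0"
    using \<open>0 < c\<close> by (intro tendsto_sandwich[OF _ assms(3) tendsto_const]) (auto simp: assms(1))
  then have "(\<lambda>n. norm (f n) ^ 2) \<longlonglongrightarrow> 0"
    using \<open>0 < c\<close> by (simp add: tendsto_mult_left_iff)
  then have "(\<lambda>n. sqrt (norm (f n) ^ 2)) \<longlonglongrightarrow> sqrt 0"
    by (rule tendsto_real_sqrt)
  then show ?thesis
    by (simp add: tendsto_norm_zero_iff)
qed

lemma strongly_monotone_sum:
  assumes "(strongly_monotone_op r A \<and> monotone_setop B)
    \<or> (monotone_op A \<and> strongly_monotone_setop r B)"
  shows "strongly_monotone_setop r (\<lambda>x. (\<lambda>u. A x + u) ` B x)"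
  unfolding strongly_monotone_setop_def
proof (intro allI impI)
  fix x y u' v'
  assume "u' \<in> (\<lambda>u. A x + u) ` B x" "v' \<in> (\<lambda>v. A y + v) ` B y"
  then obtain u v where uv: "u \<in> B x" "v \<in> B y" "u' = A x + u" "v' = A y + v"
    by blast
  have split: "inner (u' - v') (x - y) = inner (A x - A y) (x - y) + inner (u - v) (x - y)"
    by (simp add: uv inner_diff_left inner_add_left)
  from assms show "r * norm (x - y) ^ 2 \<le> inner (u' - v') (x - y)"
  proof
    assume "strongly_monotone_op r A \<and> monotone_setop B"
    then have "r * norm (x - y) ^ 2 \<le> inner (A x - A y) (x - y)" and "0 \<le> inner (u - v) (x - y)"
      using uv(1,2) unfolding strongly_monotone_op_def monotone_setop_def by blast+
    then show ?thesis
      unfolding split by linarith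
  next
    assume "monotone_op A \<and> strongly_monotone_setop r B"
    then have "0 \<le> inner (A x - A y) (x - y)" and "r * norm (x - y) ^ 2 \<le> inner (u - v) (x - y)"
      using uv(1,2) unfolding monotone_op_def strongly_monotone_setop_def by blast+
    then show ?thesis
      unfolding split by linarith
  qed
qed

(* In the notation above, a_n = inertial_weight \<theta>_n \<alpha>_n \<beta>_n (the sequence of (C3)(iv)),
   c_n = inertial_coeff \<epsilon> \<theta>_n \<alpha>_n \<beta>_n and \<gamma> = inertial_gap \<epsilon> \<beta>c. *)

definition inertial_weight :: "real \<Rightarrow> real \<Rightarrow> real \<Rightarrow> real" where
  "inertial_weight \<theta> \<alpha> \<beta> = (1 - \<theta>) * \<beta> + \<theta> * \<alpha>"

definition inertial_coeff :: "real \<Rightarrow> real \<Rightarrow> real \<Rightarrow> real \<Rightarrow> real" where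
  "inertial_coeff \<epsilon> \<theta> \<alpha> \<beta> = (1 - \<theta>) * \<beta> * (1 + \<beta>) + \<theta> * \<alpha> * (1 + \<alpha>) + \<epsilon> * (\<beta> - \<beta>\<^sup>2)"

definition inertial_gap :: "real \<Rightarrow> real \<Rightarrow> real" where
  "inertial_gap \<epsilon> \<beta> = \<epsilon> * (1 - \<beta>)\<^sup>2 - \<epsilon> / (1 + \<epsilon>) * (\<beta> * (1 + \<beta>)) - 2 / (1 + \<epsilon>)"

lemma inertial_bound_lt_one:
  assumes "1 < \<epsilon>" and "\<beta>c < (3 + 2 * \<epsilon> - sqrt (8 * \<epsilon> + 17)) / (2 * \<epsilon>)"
  shows "\<beta>c < 1"
proof -
  have "3 < sqrt (8 * \<epsilon> + 17)"
    using \<open>1 < \<epsilon>\<close> by (intro real_less_rsqrt) simp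
  moreover have "2 * \<epsilon> * \<beta>c < 3 + 2 * \<epsilon> - sqrt (8 * \<epsilon> + 17)"
    using assms by (simp add: field_simps)
  ultimately have "2 * \<epsilon> * \<beta>c < 2 * \<epsilon> * 1"
    by linarith
  then show ?thesis
    using \<open>1 < \<epsilon>\<close> by simp
qed

lemma inertial_gap_pos:
  assumes "1 < \<epsilon>" and "0 \<le> \<beta>c" and "\<beta>c < (3 + 2 * \<epsilon> - sqrt (8 * \<epsilon> + 17)) / (2 * \<epsilon>)"
  shows "0 < inertial_gap \<epsilon> \<beta>c"
proof -
  define m where "m = 3 + 2 * \<epsilon> - 2 * \<epsilon> * \<beta>c"
  have "sqrt (8 * \<epsilon> + 17) < m"
    using assms unfolding m_def by (simp add: field_simps)
  moreover have "0 \<le> sqrt (8 * \<epsilon> + 17)"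
    using \<open>1 < \<epsilon>\<close> by simp
  ultimately have "sqrt (8 * \<epsilon> + 17) * sqrt (8 * \<epsilon> + 17) < m * m"
    by (metis mult_strict_mono order.strict_trans1)
  then have "0 < \<epsilon>\<^sup>2 * \<beta>c\<^sup>2 - (2 * \<epsilon>\<^sup>2 + 3 * \<epsilon>) * \<beta>c + \<epsilon>\<^sup>2 + \<epsilon> - 2"
    using \<open>1 < \<epsilon>\<close> unfolding m_def by (simp add: algebra_simps power2_eq_square)
  also have "\<dots> = (1 + \<epsilon>) * (\<epsilon> * (1 - \<beta>c)\<^sup>2) - \<epsilon> * (\<beta>c * (1 + \<beta>c)) - 2"
    by (simp add: algebra_simps power2_eq_square)
  also have "\<dots> = (1 + \<epsilon>) * inertial_gap \<epsilon> \<beta>c"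
    using \<open>1 < \<epsilon>\<close> unfolding inertial_gap_def by (simp add: divide_simps)
  finally show ?thesis
    using \<open>1 < \<epsilon>\<close> by (simp add: zero_less_mult_iff)
qed

lemma inertial_coeff_le:
  fixes \<epsilon> \<alpha> \<beta> \<beta>0 \<beta>c \<theta> :: real
  assumes "1 < \<epsilon>" and "0 \<le> \<beta>0" "\<beta>0 \<le> \<beta>" "\<beta> \<le> \<beta>c" "\<beta>c < 1"
    and "0 \<le> \<theta>" "\<theta> \<le> 1 / (1 + \<epsilon>)" and "0 \<le> \<alpha>" "\<alpha> \<le> 1"
  shows "inertial_coeff \<epsilon> \<theta> \<alpha> \<beta> + inertial_gap \<epsilon> \<beta>c \<le> \<epsilon> * (1 - \<beta>0)"
proof -
  define T where "T = 1 / (1 + \<epsilon>)"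
  have "\<alpha> * (1 + \<alpha>) \<le> 1 * (1 + 1)"
    using assms by (intro mult_mono) auto
  then have \<alpha>_term: "\<theta> * (\<alpha> * (1 + \<alpha>)) \<le> \<theta> * 2"
    using assms by (intro mult_left_mono) auto
  have \<beta>0_term: "\<epsilon> * (1 - \<beta>) \<le> \<epsilon> * (1 - \<beta>0)"
    using assms by (intro mult_left_mono) auto
  have "\<beta> * (1 + \<beta>) \<le> 1 * (1 + 1)"
    using assms by (intro mult_mono) auto
  then have \<theta>_term: "0 \<le> (T - \<theta>) * (2 - \<beta> * (1 + \<beta>))"
    using assms unfolding T_def by simp
  have "(1 - \<beta>c)\<^sup>2 \<le> (1 - \<beta>)\<^sup>2"
    using assms by (intro power_mono) auto
  then have sq_term: "\<epsilon> * (1 - \<beta>c)\<^sup>2 \<le> \<epsilon> * (1 - \<beta>)\<^sup>2"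
    using assms by (intro mult_left_mono) auto
  have "\<beta> * (1 + \<beta>) \<le> \<beta>c * (1 + \<beta>c)"
    using assms by (intro mult_mono) auto
  moreover have "T \<le> 1"
    using assms unfolding T_def by simp
  ultimately have \<beta>c_term: "(1 - T) * (\<beta> * (1 + \<beta>)) \<le> (1 - T) * (\<beta>c * (1 + \<beta>c))"
    by (intro mult_left_mono) auto
  have gap: "inertial_gap \<epsilon> \<beta>c = \<epsilon> * (1 - \<beta>c)\<^sup>2 - (1 - T) * (\<beta>c * (1 + \<beta>c)) - 2 * T"
    using assms unfolding inertial_gap_def T_def by (simp add: field_simps)
  have "\<epsilon> * (1 - \<beta>) - \<epsilon> * (\<beta> - \<beta>\<^sup>2) = \<epsilon> * (1 - \<beta>)\<^sup>2"
    by (simp add: algebra_simps power2_eq_square)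
  moreover have "(1 - \<theta>) * \<beta> * (1 + \<beta>) + 2 * \<theta>
      = (1 - T) * (\<beta> * (1 + \<beta>)) + 2 * T - (T - \<theta>) * (2 - \<beta> * (1 + \<beta>))"
    by (simp add: algebra_simps)
  ultimately show ?thesis
    unfolding gap inertial_coeff_def using \<alpha>_term \<beta>0_term \<theta>_term sq_term \<beta>c_term
    by (simp add: algebra_simps)
qed

lemma inertial_coeff_bounds:
  fixes \<epsilon> \<alpha> \<beta> \<beta>c \<theta> :: real
  assumes "1 < \<epsilon>" and "0 \<le> \<beta>" "\<beta> \<le> \<beta>c" "\<beta>c < 1"
    and "0 \<le> \<theta>" "\<theta> \<le> 1 / (1 + \<epsilon>)" and "0 \<le> \<alpha>" "\<alpha> \<le> 1"
  shows "0 \<le> inertial_weight \<theta> \<alpha> \<beta>" and "inertial_weight \<theta> \<alpha> \<beta> \<le> (1 + \<beta>c) / 2"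
    and "0 \<le> inertial_coeff \<epsilon> \<theta> \<alpha> \<beta>"
proof -
  have "1 / (1 + \<epsilon>) \<le> 1 / 2"
    using assms by (simp add: field_simps)
  then have \<theta>: "0 \<le> \<theta>" "\<theta> \<le> 1 / 2"
    using assms by linarith+
  show "0 \<le> inertial_weight \<theta> \<alpha> \<beta>"
    unfolding inertial_weight_def using \<theta> assms by simp
  have "(1 - \<theta>) * \<beta> \<le> (1 - \<theta>) * \<beta>c" and "\<theta> * \<alpha> \<le> \<theta> * 1"
    and "\<theta> * (1 - \<beta>c) \<le> 1 / 2 * (1 - \<beta>c)"
    using \<theta> assms by (auto intro: mult_left_mono mult_right_mono simp del: mult_1_right)
  then show "inertial_weight \<theta> \<alpha> \<beta> \<le> (1 + \<beta>c) / 2"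
    unfolding inertial_weight_def by (simp add: algebra_simps)
  have "0 \<le> \<beta> * (1 - \<beta>)"
    using assms by simp
  then have "0 \<le> \<beta> - \<beta>\<^sup>2"
    by (simp add: algebra_simps power2_eq_square)
  then show "0 \<le> inertial_coeff \<epsilon> \<theta> \<alpha> \<beta>"
    unfolding inertial_coeff_def using \<theta> assms by (intro add_nonneg_nonneg mult_nonneg_nonneg) auto
qed

lemma inertial_conditions:
  fixes \<alpha> \<beta> \<theta> :: "nat \<Rightarrow> real"
  assumes eps: "\<epsilon> > 1"
    and C3i: "\<forall>n\<ge>1. 0 \<le> \<alpha> n \<and> \<alpha> n \<le> 1"
    and C3ii: "\<forall>n\<ge>1. 0 \<le> \<beta> n \<and> \<beta> n \<le> \<beta> (Suc n) \<and> \<beta> (Suc n) \<le> \<beta>c"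
    and C3ii': "\<beta>c < (3 + 2 * \<epsilon> - sqrt (8 * \<epsilon> + 17)) / (2 * \<epsilon>)"
    and C3iii: "\<forall>n\<ge>1. 0 < \<theta>c \<and> \<theta>c < \<theta> n \<and> \<theta> n \<le> \<theta> (Suc n) \<and> \<theta> (Suc n) \<le> 1 / (1 + \<epsilon>)"
  shows "0 < inertial_gap \<epsilon> \<beta>c" and "(1 + \<beta>c) / 2 < 1"
    and "\<And>n. 1 \<le> n \<Longrightarrow>
      0 \<le> inertial_weight (\<theta> n) (\<alpha> n) (\<beta> n) \<and> inertial_weight (\<theta> n) (\<alpha> n) (\<beta> n) \<le> (1 + \<beta>c) / 2"
    and "\<And>n. 1 \<le> n \<Longrightarrow> 0 \<le> inertial_coeff \<epsilon> (\<theta> n) (\<alpha> n) (\<beta> n)"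
    and "\<And>n. 1 \<le> n \<Longrightarrow>
      inertial_coeff \<epsilon> (\<theta> (Suc n)) (\<alpha> (Suc n)) (\<beta> (Suc n)) + inertial_gap \<epsilon> \<beta>c \<le> \<epsilon> * (1 - \<beta> n)"
proof -
  have params: "0 \<le> \<alpha> n" "\<alpha> n \<le> 1" "0 \<le> \<beta> n" "\<beta> n \<le> \<beta> (Suc n)" "\<beta> (Suc n) \<le> \<beta>c"
    "0 \<le> \<theta> n" "\<theta> n \<le> 1 / (1 + \<epsilon>)" if "1 \<le> n" for n
    using C3i C3ii C3iii that by (auto intro: order_trans less_imp_le)
  have "\<beta>c < 1"
    by (rule inertial_bound_lt_one[OF eps C3ii'])
  then show "(1 + \<beta>c) / 2 < 1"
    by simp
  show "0 < inertial_gap \<epsilon> \<beta>c"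
    using inertial_gap_pos[OF eps _ C3ii'] params(3-5)[of 1] by simp
  show "0 \<le> inertial_weight (\<theta> n) (\<alpha> n) (\<beta> n) \<and>
      inertial_weight (\<theta> n) (\<alpha> n) (\<beta> n) \<le> (1 + \<beta>c) / 2"
    and "0 \<le> inertial_coeff \<epsilon> (\<theta> n) (\<alpha> n) (\<beta> n)" if "1 \<le> n" for n
    using inertial_coeff_bounds[OF eps _ _ \<open>\<beta>c < 1\<close>] params[OF that] by (auto intro: order_trans)
  show "inertial_coeff \<epsilon> (\<theta> (Suc n)) (\<alpha> (Suc n)) (\<beta> (Suc n)) + inertial_gap \<epsilon> \<beta>c
      \<le> \<epsilon> * (1 - \<beta> n)" if "1 \<le> n" for n
    using inertial_coeff_le[OF eps _ _ _ \<open>\<beta>c < 1\<close>] params[OF that] params(1,2,6,7)[of "Suc n"]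
    by simp
qed

lemma stepsize_ge_min:
  fixes A :: "'a::real_normed_vector \<Rightarrow> 'a" and w y :: "nat \<Rightarrow> 'a"
    and lam \<mu>s p :: "nat \<Rightarrow> real"
  assumes "L-lipschitz_on UNIV A" and "0 \<le> \<mu>"
    and \<mu>s_nonneg: "\<forall>n\<ge>1. \<mu>s n \<ge> 0" and p_nonneg: "\<forall>n\<ge>1. p n \<ge> 0"
    and lam_def: "\<forall>n\<ge>1. lam (Suc n) =
        (if A (w n) \<noteq> A (y n)
         then min ((\<mu>s n + \<mu>) * norm (w n - y n) / norm (A (w n) - A (y n))) (lam n + p n)
         else lam n + p n)"
  shows "\<forall>n\<ge>1. min (lam 1) (\<mu> / (L + 1)) \<le> lam n"
proof (intro allI impI)
  fix n :: nat
  assume "1 \<le> n"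
  then show "min (lam 1) (\<mu> / (L + 1)) \<le> lam n"
  proof (induction n rule: nat_induct_at_least)
    case (Suc n)
    have "\<mu> / (L + 1) \<le> (\<mu>s n + \<mu>) * norm (w n - y n) / norm (A (w n) - A (y n))"
      if "A (w n) \<noteq> A (y n)"
    proof -
      have "0 \<le> L"
        using \<open>L-lipschitz_on UNIV A\<close> lipschitz_on_nonneg by blast
      have "norm (A (w n) - A (y n)) \<le> L * norm (w n - y n)"
        using lipschitz_onD[OF \<open>L-lipschitz_on UNIV A\<close>] by (simp add: dist_norm)
      also have "\<dots> \<le> (L + 1) * norm (w n - y n)"
        by (simp add: mult_right_mono)
      finally have "\<mu> * norm (A (w n) - A (y n)) \<le> (\<mu>s n + \<mu>) * ((L + 1) * norm (w n - y n))"
        using \<open>0 \<le> \<mu>\<close> \<mu>s_nonneg Suc.hyps by (intro mult_mono) auto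
      then show ?thesis
        using that \<open>0 \<le> L\<close> by (simp add: field_simps)
    qed
    then show ?case
      using Suc p_nonneg lam_def by (auto simp: min_le_iff_disj)
  qed simp
qed

lemma stepsize_mul_le:
  fixes A :: "'a::real_normed_vector \<Rightarrow> 'a" and w y :: "nat \<Rightarrow> 'a"
    and lam \<mu>s p :: "nat \<Rightarrow> real"
  assumes "0 \<le> \<mu>" and "\<forall>n\<ge>1. \<mu>s n \<ge> 0"
    and lam_def: "\<forall>n\<ge>1. lam (Suc n) =
        (if A (w n) \<noteq> A (y n)
         then min ((\<mu>s n + \<mu>) * norm (w n - y n) / norm (A (w n) - A (y n))) (lam n + p n)
         else lam n + p n)"
  shows "\<forall>n\<ge>1. lam (Suc n) * norm (A (w n) - A (y n)) \<le> (\<mu>s n + \<mu>) * norm (w n - y n)"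
proof (intro allI impI)
  fix n :: nat
  assume "1 \<le> n"
  show "lam (Suc n) * norm (A (w n) - A (y n)) \<le> (\<mu>s n + \<mu>) * norm (w n - y n)"
  proof (cases "A (w n) = A (y n)")
    case True
    then show ?thesis
      using assms \<open>1 \<le> n\<close> by simp
  next
    case False
    then have "lam (Suc n) \<le> (\<mu>s n + \<mu>) * norm (w n - y n) / norm (A (w n) - A (y n))"
      using lam_def \<open>1 \<le> n\<close> by simp
    then show ?thesis
      using False by (simp add: pos_le_divide_eq)
  qed
qed

lemma convergent_of_bounded_below_le_add_summable:
  fixes lam p :: "nat \<Rightarrow> real"
  assumes "\<forall>n\<ge>1. m \<le> lam n" and "\<forall>n\<ge>1. lam (Suc n) \<le> lam n + p n" and "summable p"
  shows "convergent lam"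
proof -
  define S where "S n = (\<Sum>i<n. p i)" for n
  have S: "S \<longlonglongrightarrow> suminf p"
    unfolding S_def using summable_LIMSEQ[OF \<open>summable p\<close>] by simp
  then obtain K where K: "\<And>n. norm (S n) \<le> K"
    using convergent_imp_Bseq convergentI by (metis BseqE)
  \<comment> \<open>subtracting the partial sums of p makes the step sizes decreasing\<close>
  define V where "V k = lam (Suc k) - S (Suc k)" for k
  have "decseq V"
  proof (rule decseq_SucI)
    fix k
    show "V (Suc k) \<le> V k"
      using assms(2)[rule_format, of "Suc k"] unfolding V_def S_def by simp
  qed
  moreover have "m - K \<le> V k" for k
    using assms(1)[rule_format, of "Suc k"] K[of "Suc k"] unfolding V_def by simp
  ultimately obtain l where "V \<longlonglongrightarrow> l"
    by (metis decseq_convergent)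
  then have "(\<lambda>k. V k + S (Suc k)) \<longlonglongrightarrow> l + suminf p"
    by (intro tendsto_add LIMSEQ_Suc S)
  then have "lam \<longlonglongrightarrow> l + suminf p"
    unfolding V_def by (simp add: LIMSEQ_imp_Suc)
  then show ?thesis
    by (rule convergentI)
qed

lemma eventually_contractive_of_stepsize_LIMSEQ:
  fixes lam \<mu>s a b :: "nat \<Rightarrow> real"
  assumes lam_ge: "\<forall>n\<ge>1. m \<le> lam n" and "0 < m" and lam_lim: "lam \<longlonglongrightarrow> \<Lambda>"
    and \<mu>s_lim: "\<mu>s \<longlonglongrightarrow> 0" and "\<mu> < \<kappa>"
    and step: "\<forall>n\<ge>1. lam (Suc n) * a n \<le> (\<mu>s n + \<mu>) * b n"
    and b_nonneg: "\<And>n. 0 \<le> b n"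
  shows "\<exists>N\<ge>1. \<forall>n\<ge>N. lam n * a n \<le> \<kappa> * b n"
proof -
  have "m \<le> \<Lambda>"
    using lam_lim by (rule LIMSEQ_le_const) (use lam_ge in blast)
  then have "(\<lambda>n. lam n / lam (Suc n) * (\<mu>s n + \<mu>)) \<longlonglongrightarrow> \<Lambda> / \<Lambda> * (0 + \<mu>)"
    using \<open>0 < m\<close>
    by (intro tendsto_mult[OF tendsto_divide[OF lam_lim LIMSEQ_Suc[OF lam_lim]]
          tendsto_add[OF \<mu>s_lim tendsto_const]]) simp
  moreover have "\<Lambda> / \<Lambda> * (0 + \<mu>) = \<mu>"
    using \<open>m \<le> \<Lambda>\<close> \<open>0 < m\<close> by simp
  ultimately have "eventually (\<lambda>n. lam n / lam (Suc n) * (\<mu>s n + \<mu>) < \<kappa>) sequentially"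
    using \<open>\<mu> < \<kappa>\<close> by (metis order_tendstoD(2))
  then obtain N where N: "\<And>n. N \<le> n \<Longrightarrow> lam n / lam (Suc n) * (\<mu>s n + \<mu>) < \<kappa>"
    unfolding eventually_sequentially by blast
  have "lam n * a n \<le> \<kappa> * b n" if "1 \<le> n" "N \<le> n" for n
  proof -
    have pos: "0 < lam n" "0 < lam (Suc n)"
      using lam_ge \<open>0 < m\<close> that by (meson le_SucI less_le_trans)+
    then have "lam n * a n = lam n / lam (Suc n) * (lam (Suc n) * a n)"
      by simp
    also have "\<dots> \<le> lam n / lam (Suc n) * ((\<mu>s n + \<mu>) * b n)"
      using pos step that by (intro mult_left_mono) auto
    also have "\<dots> = (lam n / lam (Suc n) * (\<mu>s n + \<mu>)) * b n"
      by simp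
    also have "\<dots> \<le> \<kappa> * b n"
      using N[OF \<open>N \<le> n\<close>] b_nonneg by (intro mult_right_mono) auto
    finally show ?thesis .
  qed
  then show ?thesis
    by (intro exI[of _ "max 1 N"]) auto
qed

lemma stepsize_rule_properties:
  fixes A :: "'a::real_normed_vector \<Rightarrow> 'a" and w y :: "nat \<Rightarrow> 'a"
    and lam \<mu>s p :: "nat \<Rightarrow> real"
  assumes Lip: "L-lipschitz_on UNIV A" and "0 < \<mu>" "\<mu> < \<kappa>" and "0 < lam 1"
    and \<mu>s_nonneg: "\<forall>n\<ge>1. \<mu>s n \<ge> 0" and p_nonneg: "\<forall>n\<ge>1. p n \<ge> 0"
    and "summable p" and "\<mu>s \<longlonglongrightarrow> 0"
    and lam_def: "\<forall>n\<ge>1. lam (Suc n) =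
        (if A (w n) \<noteq> A (y n)
         then min ((\<mu>s n + \<mu>) * norm (w n - y n) / norm (A (w n) - A (y n))) (lam n + p n)
         else lam n + p n)"
  obtains m N where "0 < m" and "\<forall>n\<ge>1. m \<le> lam n" and "1 \<le> N"
    and "\<forall>n\<ge>N. lam n * norm (A (w n) - A (y n)) \<le> \<kappa> * norm (w n - y n)"
proof -
  define m where "m = min (lam 1) (\<mu> / (L + 1))"
  have "0 < m"
    using assms lipschitz_on_nonneg[OF Lip] unfolding m_def by simp
  have lam_ge: "\<forall>n\<ge>1. m \<le> lam n"
    unfolding m_def using stepsize_ge_min[OF Lip _ \<mu>s_nonneg p_nonneg lam_def] \<open>0 < \<mu>\<close> by simp
  have "\<forall>n\<ge>1. lam (Suc n) \<le> lam n + p n"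
    using lam_def by simp
  then obtain \<Lambda> where "lam \<longlonglongrightarrow> \<Lambda>"
    using convergent_of_bounded_below_le_add_summable[OF lam_ge _ \<open>summable p\<close>]
    unfolding convergent_def by blast
  then show ?thesis
    using that[OF \<open>0 < m\<close> lam_ge] \<open>0 < \<mu>\<close>
      eventually_contractive_of_stepsize_LIMSEQ[OF lam_ge \<open>0 < m\<close> _ \<open>\<mu>s \<longlonglongrightarrow> 0\<close> \<open>\<mu> < \<kappa>\<close>
        stepsize_mul_le[OF _ \<mu>s_nonneg lam_def]]
    by auto
qed

lemma forward_backward_forward_estimate:
  fixes A :: "'a::real_inner \<Rightarrow> 'a"
  assumes res: "in_resolvent B l (w - l *\<^sub>R A w) y"
    and "q \<in> zeros_sum A B"
    and mono: "strongly_monotone_setop r (\<lambda>x. (\<lambda>u. A x + u) ` B x)"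
    and "0 \<le> l" and contractive: "l * norm (A w - A y) \<le> \<kappa> * norm (w - y)" and "0 \<le> \<kappa>"
  shows "norm (y - l *\<^sub>R (A y - A w) - q) ^ 2
    \<le> norm (w - q) ^ 2 - ((1 - \<kappa>\<^sup>2) * norm (w - y) ^ 2 + 2 * l * r * norm (y - q) ^ 2)"
proof -
  obtain v where v: "v \<in> B y" "w - l *\<^sub>R A w - y = l *\<^sub>R v"
    using res unfolding in_resolvent_def by auto
  obtain v0 where v0: "v0 \<in> B q" "A q + v0 = 0"
    using \<open>q \<in> zeros_sum A B\<close> unfolding zeros_sum_def by blast
  \<comment> \<open>the forward-backward residual is l times an element of (A + B) y - (A + B) q\<close>
  have residual: "w - y - l *\<^sub>R (A w - A y) = l *\<^sub>R ((A y + v) - (A q + v0))"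
    using v(2) v0(2) by (simp add: algebra_simps)
  have "A y + v \<in> (\<lambda>u. A y + u) ` B y" and "A q + v0 \<in> (\<lambda>u. A q + u) ` B q"
    using v(1) v0(1) by blast+
  then have "r * norm (y - q) ^ 2 \<le> inner ((A y + v) - (A q + v0)) (y - q)"
    using mono unfolding strongly_monotone_setop_def by blast
  then have key: "l * r * norm (y - q) ^ 2 \<le> inner (w - y - l *\<^sub>R (A w - A y)) (y - q)"
    unfolding residual using \<open>0 \<le> l\<close> by (simp add: mult.assoc mult_left_mono)
  have "(l * norm (A w - A y)) ^ 2 \<le> (\<kappa> * norm (w - y)) ^ 2"
    using contractive \<open>0 \<le> l\<close> by (intro power_mono) auto
  moreover have "norm (y - l *\<^sub>R (A y - A w) - q) ^ 2 = norm (w - q) ^ 2 - norm (w - y) ^ 2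
      + (l * norm (A w - A y)) ^ 2 - 2 * inner (w - y - l *\<^sub>R (A w - A y)) (y - q)"
  proof -
    have "(w - q) - (y - q) = w - y"
      and "(y - l *\<^sub>R (A y - A w) - q) - (y - q) = l *\<^sub>R (A w - A y)"
      and "(w - q) - (y - l *\<^sub>R (A y - A w) - q) = w - y - l *\<^sub>R (A w - A y)"
      by (simp_all add: algebra_simps)
    with norm_sq_via_point[of "y - l *\<^sub>R (A y - A w) - q" "w - q" "y - q"] show ?thesis
      using \<open>0 \<le> l\<close> by (simp only:) (simp add: power_mult_distrib)
  qed
  moreover have "(\<kappa> * norm (w - y)) ^ 2 = \<kappa>\<^sup>2 * norm (w - y) ^ 2"
    and "(1 - \<kappa>\<^sup>2) * norm (w - y) ^ 2 = norm (w - y) ^ 2 - \<kappa>\<^sup>2 * norm (w - y) ^ 2"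
    and "2 * l * r * norm (y - q) ^ 2 = 2 * (l * r * norm (y - q) ^ 2)"
    by (simp_all add: power_mult_distrib algebra_simps)
  ultimately show ?thesis
    using key by linarith
qed

lemma inertial_step_estimate:
  fixes x0 x1 x2 u q :: "'a::real_inner"
  assumes "0 \<le> \<theta>" and "\<theta> \<le> 1 / (1 + \<epsilon>)" and "0 \<le> \<epsilon>" and "0 \<le> \<beta>"
    and fbf: "norm (u - q) ^ 2 \<le> norm (x1 + \<alpha> *\<^sub>R (x1 - x0) - q) ^ 2 - D"
    and x2: "x2 = (1 - \<theta>) *\<^sub>R (x1 + \<beta> *\<^sub>R (x1 - x0)) + \<theta> *\<^sub>R u"
  shows "norm (x2 - q) ^ 2 \<le> (1 + inertial_weight \<theta> \<alpha> \<beta>) * norm (x1 - q) ^ 2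
      - inertial_weight \<theta> \<alpha> \<beta> * norm (x0 - q) ^ 2 + inertial_coeff \<epsilon> \<theta> \<alpha> \<beta> * norm (x1 - x0) ^ 2
      - \<epsilon> * (1 - \<beta>) * norm (x2 - x1) ^ 2 - \<theta> * D"
proof -
  define z where "z = x1 + \<beta> *\<^sub>R (x1 - x0)"
  define G1 G0 d1 d2 Q where "G1 = norm (x1 - q) ^ 2" and "G0 = norm (x0 - q) ^ 2"
    and "d1 = norm (x1 - x0) ^ 2" and "d2 = norm (x2 - x1) ^ 2" and "Q = norm (z - u) ^ 2"
  \<comment> \<open>both extrapolations are affine combinations of x1 and x0 with coefficients 1 + t and -t\<close>
  have extrapolation:
    "norm (x1 + t *\<^sub>R (x1 - x0) - q) ^ 2 = (1 + t) * G1 - t * G0 + t * (1 + t) * d1" for t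
  proof -
    have "x1 + t *\<^sub>R (x1 - x0) - q = (1 - (- t)) *\<^sub>R (x1 - q) + (- t) *\<^sub>R (x0 - q)"
      by (simp add: algebra_simps)
    then show ?thesis
      unfolding G1_def G0_def d1_def using norm_convex_comb_sq[of "- t" "x1 - q" "x0 - q"]
      by (simp add: algebra_simps)
  qed
  have "x2 - q = (1 - \<theta>) *\<^sub>R (z - q) + \<theta> *\<^sub>R (u - q)"
    unfolding x2 z_def by (simp add: algebra_simps)
  then have "norm (x2 - q) ^ 2
      = (1 - \<theta>) * norm (z - q) ^ 2 + \<theta> * norm (u - q) ^ 2 - \<theta> * (1 - \<theta>) * Q"
    unfolding Q_def using norm_convex_comb_sq[of \<theta> "z - q" "u - q"] by simp
  also have "\<dots> \<le> (1 - \<theta>) * ((1 + \<beta>) * G1 - \<beta> * G0 + \<beta> * (1 + \<beta>) * d1)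
      + \<theta> * (((1 + \<alpha>) * G1 - \<alpha> * G0 + \<alpha> * (1 + \<alpha>) * d1) - D) - \<theta> * (1 - \<theta>) * Q"
    using fbf \<open>0 \<le> \<theta>\<close> unfolding z_def extrapolation by (simp add: mult_left_mono)
  finally have estimate: "norm (x2 - q) ^ 2 \<le> (1 - \<theta>) * ((1 + \<beta>) * G1 - \<beta> * G0 + \<beta> * (1 + \<beta>) * d1)
      + \<theta> * (((1 + \<alpha>) * G1 - \<alpha> * G0 + \<alpha> * (1 + \<alpha>) * d1) - D) - \<theta> * (1 - \<theta>) * Q" .
  \<comment> \<open>the term \<theta>(1 - \<theta>) Q absorbs \<epsilon> times the squared step x2 - x1, since \<epsilon> \<theta> \<le> 1 - \<theta>\<close>
  have "x2 - z = (x2 - x1) - \<beta> *\<^sub>R (x1 - x0)"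
    unfolding z_def by (simp add: algebra_simps)
  then have "(1 - \<beta>) * d2 + (\<beta>\<^sup>2 - \<beta>) * d1 \<le> norm (x2 - z) ^ 2"
    unfolding d1_def d2_def using norm_diff_scaleR_sq_ge[OF \<open>0 \<le> \<beta>\<close>, of "x2 - x1" "x1 - x0"]
    by (simp only:)
  also have "norm (x2 - z) ^ 2 = \<theta>\<^sup>2 * Q"
  proof -
    have "x2 - z = \<theta> *\<^sub>R (u - z)"
      unfolding x2 z_def by (simp add: algebra_simps)
    then show ?thesis
      unfolding Q_def by (simp add: power_mult_distrib norm_minus_commute)
  qed
  finally have "\<epsilon> * ((1 - \<beta>) * d2 + (\<beta>\<^sup>2 - \<beta>) * d1) \<le> \<epsilon> * (\<theta>\<^sup>2 * Q)"
    using \<open>0 \<le> \<epsilon>\<close> by (rule mult_left_mono)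
  also have "\<dots> = (\<theta> * Q) * (\<epsilon> * \<theta>)"
    by (simp add: power2_eq_square)
  also have "\<dots> \<le> (\<theta> * Q) * (1 - \<theta>)"
  proof (rule mult_left_mono)
    show "\<epsilon> * \<theta> \<le> 1 - \<theta>"
      using \<open>\<theta> \<le> 1 / (1 + \<epsilon>)\<close> \<open>0 \<le> \<epsilon>\<close> by (simp add: field_simps)
    show "0 \<le> \<theta> * Q"
      using \<open>0 \<le> \<theta>\<close> unfolding Q_def by simp
  qed
  finally have absorb: "\<epsilon> * ((1 - \<beta>) * d2 + (\<beta>\<^sup>2 - \<beta>) * d1) \<le> \<theta> * (1 - \<theta>) * Q"
    by (simp add: mult_ac)
  show ?thesis
    using estimate absorb unfolding inertial_weight_def inertial_coeff_def
      G1_def[symmetric] G0_def[symmetric] d1_def[symmetric] d2_def[symmetric]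
    by (simp add: algebra_simps)
qed

lemma algorithm_step_estimate:
  fixes A :: "'a::real_inner \<Rightarrow> 'a"
  assumes res: "in_resolvent B l (w - l *\<^sub>R A w) y" and q: "q \<in> zeros_sum A B"
    and mono: "strongly_monotone_setop r (\<lambda>x. (\<lambda>u. A x + u) ` B x)"
    and "0 \<le> l" and contractive: "l * norm (A w - A y) \<le> \<kappa> * norm (w - y)" and "0 \<le> \<kappa>"
    and w: "w = x1 + \<alpha> *\<^sub>R (x1 - x0)"
    and x2: "x2 = (1 - \<theta>) *\<^sub>R (x1 + \<beta> *\<^sub>R (x1 - x0)) + \<theta> *\<^sub>R (y - l *\<^sub>R (A y - A w))"
    and "0 \<le> \<theta>" "\<theta> \<le> 1 / (1 + \<epsilon>)" "0 \<le> \<epsilon>" "0 \<le> \<beta>"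
  shows "norm (x2 - q) ^ 2 \<le> (1 + inertial_weight \<theta> \<alpha> \<beta>) * norm (x1 - q) ^ 2
      - inertial_weight \<theta> \<alpha> \<beta> * norm (x0 - q) ^ 2 + inertial_coeff \<epsilon> \<theta> \<alpha> \<beta> * norm (x1 - x0) ^ 2
      - \<epsilon> * (1 - \<beta>) * norm (x2 - x1) ^ 2
      - \<theta> * ((1 - \<kappa>\<^sup>2) * norm (w - y) ^ 2 + 2 * l * r * norm (y - q) ^ 2)"
proof -
  have "norm (y - l *\<^sub>R (A y - A w) - q) ^ 2
      \<le> norm (x1 + \<alpha> *\<^sub>R (x1 - x0) - q) ^ 2
        - ((1 - \<kappa>\<^sup>2) * norm (w - y) ^ 2 + 2 * l * r * norm (y - q) ^ 2)"
    using forward_backward_forward_estimate[OF res q mono \<open>0 \<le> l\<close> contractive \<open>0 \<le> \<kappa>\<close>]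
    unfolding w .
  then show ?thesis
    using inertial_step_estimate[OF \<open>0 \<le> \<theta>\<close> \<open>\<theta> \<le> 1 / (1 + \<epsilon>)\<close> \<open>0 \<le> \<epsilon>\<close> \<open>0 \<le> \<beta>\<close> _ x2] by blast
qed

lemma inertial_recursion_tendsto_zero:
  fixes G d e a b c :: "nat \<Rightarrow> real"
  assumes recursion: "\<And>n. N \<le> n \<Longrightarrow>
      G (Suc n) \<le> (1 + a n) * G n - a n * G (n - 1) + c n * d n - b n * d (Suc n) - e n"
    and a_mono: "\<And>n. N \<le> n \<Longrightarrow> a n \<le> a (Suc n)"
    and c_le: "\<And>n. N \<le> n \<Longrightarrow> c (Suc n) + \<gamma> \<le> b n"
    and a_bounds: "\<And>n. N \<le> n \<Longrightarrow> 0 \<le> a n \<and> a n \<le> \<rho>" and "\<rho> < 1"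
    and c_nonneg: "\<And>n. N \<le> n \<Longrightarrow> 0 \<le> c n"
    and G_nonneg: "\<And>n. 0 \<le> G n" and d_nonneg: "\<And>n. 0 \<le> d n"
    and e_nonneg: "\<And>n. N \<le> n \<Longrightarrow> 0 \<le> e n" and "0 < \<gamma>"
  shows "d \<longlonglongrightarrow> 0" and "e \<longlonglongrightarrow> 0"
proof -
  define \<Phi> where "\<Phi> n = G n - a n * G (n - 1) + c n * d n" for n
  have \<Phi>_step: "\<Phi> (Suc n) + (\<gamma> * d (Suc n) + e n) \<le> \<Phi> n" if "N \<le> n" for n
  proof -
    have "a n * G n \<le> a (Suc n) * G n"
      using a_mono[OF that] G_nonneg by (rule mult_right_mono)
    moreover have "c (Suc n) * d (Suc n) \<le> (b n - \<gamma>) * d (Suc n)"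
      using c_le[OF that] d_nonneg by (intro mult_right_mono) auto
    ultimately show ?thesis
      using recursion[OF that] unfolding \<Phi>_def by (simp add: algebra_simps)
  qed
  have decrease_nonneg: "0 \<le> \<gamma> * d (Suc n) + e n" if "N \<le> n" for n
    using \<open>0 < \<gamma>\<close> d_nonneg e_nonneg[OF that] by simp
  have \<Phi>_le: "\<Phi> (N + k) \<le> \<Phi> N" for k
  proof (induction k)
    case (Suc k)
    then show ?case
      using \<Phi>_step[of "N + k"] decrease_nonneg[of "N + k"] by simp
  qed simp
  \<comment> \<open>since a stays below \<rho> < 1, the decreasing \<Phi> keeps G bounded\<close>
  define M where "M = max (G N) (\<bar>\<Phi> N\<bar> / (1 - \<rho>))"
  have "\<bar>\<Phi> N\<bar> / (1 - \<rho>) \<le> M"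
    unfolding M_def by simp
  then have "\<bar>\<Phi> N\<bar> \<le> (1 - \<rho>) * M"
    using \<open>\<rho> < 1\<close> by (simp add: pos_divide_le_eq mult.commute)
  then have G_le: "G (N + k) \<le> M" for k
  proof (induction k)
    case (Suc k)
    have "a (Suc (N + k)) * G (N + k) \<le> \<rho> * M"
      using a_bounds[of "Suc (N + k)"] G_nonneg Suc by (intro mult_mono) auto
    moreover have "0 \<le> c (Suc (N + k)) * d (Suc (N + k))"
      using c_nonneg[of "Suc (N + k)"] d_nonneg by simp
    ultimately show ?case
      using \<Phi>_le[of "Suc k"] Suc.prems unfolding \<Phi>_def by (simp add: algebra_simps)
  qed (simp add: M_def)
  have \<Phi>_ge: "min (\<Phi> N) (- (\<rho> * M)) \<le> \<Phi> (N + k)" for k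
  proof (cases k)
    case (Suc j)
    have "a (Suc (N + j)) * G (N + j) \<le> \<rho> * M"
      using a_bounds[of "Suc (N + j)"] G_nonneg G_le by (intro mult_mono) auto
    moreover have "0 \<le> c (Suc (N + j)) * d (Suc (N + j))"
      using c_nonneg[of "Suc (N + j)"] d_nonneg by simp
    ultimately show ?thesis
      using G_nonneg[of "Suc (N + j)"] unfolding \<Phi>_def Suc by simp
  qed simp
  have "decseq (\<lambda>k. \<Phi> (N + k))"
  proof (rule decseq_SucI)
    fix k
    show "\<Phi> (N + Suc k) \<le> \<Phi> (N + k)"
      using \<Phi>_step[of "N + k"] decrease_nonneg[of "N + k"] by simp
  qed
  then obtain l where lim: "(\<lambda>k. \<Phi> (N + k)) \<longlonglongrightarrow> l"
    using \<Phi>_ge by (metis decseq_convergent)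
  have "(\<lambda>k. \<Phi> (N + k) - \<Phi> (Suc (N + k))) \<longlonglongrightarrow> l - l"
    using LIMSEQ_Suc[OF lim] by (intro tendsto_diff[OF lim]) simp
  then have diff_lim: "(\<lambda>k. \<Phi> (N + k) - \<Phi> (Suc (N + k))) \<longlonglongrightarrow> 0"
    by simp
  have "(\<lambda>k. \<gamma> * d (Suc (N + k)) + e (N + k)) \<longlonglongrightarrow> 0"
  proof (rule tendsto_sandwich[OF always_eventually always_eventually tendsto_const diff_lim])
    show "\<forall>k. 0 \<le> \<gamma> * d (Suc (N + k)) + e (N + k)"
      using decrease_nonneg by simp
    show "\<forall>k. \<gamma> * d (Suc (N + k)) + e (N + k) \<le> \<Phi> (N + k) - \<Phi> (Suc (N + k))"
    proof
      fix k
      show "\<gamma> * d (Suc (N + k)) + e (N + k) \<le> \<Phi> (N + k) - \<Phi> (Suc (N + k))"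
        using \<Phi>_step[of "N + k"] by linarith
    qed
  qed
  then have decrease_lim: "(\<lambda>n. \<gamma> * d (Suc n) + e n) \<longlonglongrightarrow> 0"
    using LIMSEQ_offset[of "\<lambda>n. \<gamma> * d (Suc n) + e n" N] by (simp add: add.commute)
  have ev: "eventually (\<lambda>n. N \<le> n) sequentially"
    by (rule eventually_ge_at_top)
  have bounds: "0 \<le> \<gamma> * d (Suc n)" "\<gamma> * d (Suc n) \<le> \<gamma> * d (Suc n) + e n"
    "0 \<le> e n" "e n \<le> \<gamma> * d (Suc n) + e n" if "N \<le> n" for n
    using d_nonneg[of "Suc n"] \<open>0 < \<gamma>\<close> e_nonneg[OF that] by simp_all
  have "(\<lambda>n. \<gamma> * d (Suc n)) \<longlonglongrightarrow> 0"
    using eventually_mono[OF ev bounds(1)] eventually_mono[OF ev bounds(2)]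
    by (rule tendsto_sandwich[OF _ _ tendsto_const decrease_lim])
  then have "(\<lambda>n. d (Suc n)) \<longlonglongrightarrow> 0"
    using \<open>0 < \<gamma>\<close> tendsto_mult_left_iff[of \<gamma> "\<lambda>n. d (Suc n)" 0 sequentially] by simp
  then show "d \<longlonglongrightarrow> 0"
    by (rule LIMSEQ_imp_Suc)
  show "e \<longlonglongrightarrow> 0"
    using eventually_mono[OF ev bounds(3)] eventually_mono[OF ev bounds(4)]
    by (rule tendsto_sandwich[OF _ _ tendsto_const decrease_lim])
qed

lemma tendsto_of_inertial_residuals:
  fixes x w y :: "nat \<Rightarrow> 'a::real_normed_vector"
  assumes "(\<lambda>n. x n - x (n - 1)) \<longlonglongrightarrow> 0" and "(\<lambda>n. w n - y n) \<longlonglongrightarrow> 0" and "(\<lambda>n. y n - q) \<longlonglongrightarrow> 0"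
    and w_def: "\<forall>n\<ge>1. w n = x n + \<alpha> n *\<^sub>R (x n - x (n - 1))" and \<alpha>_bounds: "\<forall>n\<ge>1. 0 \<le> \<alpha> n \<and> \<alpha> n \<le> 1"
  shows "x \<longlonglongrightarrow> q"
proof -
  have "norm (x n - w n) \<le> norm (x n - x (n - 1))" if "1 \<le> n" for n
    using w_def \<alpha>_bounds that by (simp add: mult_left_le_one_le)
  then have "(\<lambda>n. x n - w n) \<longlonglongrightarrow> 0"
    by (intro Lim_null_comparison[OF _ tendsto_norm_zero[OF assms(1)]])
      (auto simp: eventually_sequentially)
  then have "(\<lambda>n. (x n - w n) + (w n - y n) + (y n - q) + q) \<longlonglongrightarrow> 0 + 0 + 0 + q"
    using assms(2,3) by (intro tendsto_add tendsto_const)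
  then show ?thesis
    by simp
qed

theorem theorem4p1:
  fixes A :: "'a::{real_inner, complete_space} \<Rightarrow> 'a"
    and B :: "'a \<Rightarrow> 'a set"
    and x w z y :: "nat \<Rightarrow> 'a"
    and lam \<alpha> \<beta> \<theta> \<mu>s p :: "nat \<Rightarrow> real"
    and \<mu> \<epsilon> \<beta>c \<theta>c L r :: real
  assumes mu: "0 < \<mu>" "\<mu> < 1"
    and lam1: "lam 1 > 0"
    and mus_nonneg: "\<forall>n\<ge>1. \<mu>s n \<ge> 0"
    and p_nonneg: "\<forall>n\<ge>1. p n \<ge> 0"
    and w_def: "\<forall>n\<ge>1. w n = x n + \<alpha> n *\<^sub>R (x n - x (n - 1))"
    and z_def: "\<forall>n\<ge>1. z n = x n + \<beta> n *\<^sub>R (x n - x (n - 1))"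
    and y_def: "\<forall>n\<ge>1. in_resolvent B (lam n) (w n - lam n *\<^sub>R A (w n)) (y n)"
    and lam_def: "\<forall>n\<ge>1. lam (Suc n) =
        (if A (w n) \<noteq> A (y n)
         then min ((\<mu>s n + \<mu>) * norm (w n - y n) / norm (A (w n) - A (y n))) (lam n + p n)
         else lam n + p n)"
    and no_stop: "\<forall>n\<ge>1. w n \<noteq> y n"
    and x_def: "\<forall>n\<ge>1. x (Suc n) =
        (1 - \<theta> n) *\<^sub>R z n + \<theta> n *\<^sub>R (y n - lam n *\<^sub>R (A (y n) - A (w n)))"
    and C1: "zeros_sum A B \<noteq> {}"
    and eps: "\<epsilon> > 1"
    and C3i: "\<forall>n\<ge>1. 0 \<le> \<alpha> n \<and> \<alpha> n \<le> 1"
    and C3ii: "\<forall>n\<ge>1. 0 \<le> \<beta> n \<and> \<beta> n \<le> \<beta> (Suc n) \<and> \<beta> (Suc n) \<le> \<beta>c"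
    and C3ii': "\<beta>c < (3 + 2 * \<epsilon> - sqrt (8 * \<epsilon> + 17)) / (2 * \<epsilon>)"
    and C3iii: "\<forall>n\<ge>1. 0 < \<theta>c \<and> \<theta>c < \<theta> n \<and> \<theta> n \<le> \<theta> (Suc n) \<and> \<theta> (Suc n) \<le> 1 / (1 + \<epsilon>)"
    and C3iv: "\<forall>n\<ge>1. (1 - \<theta> n) * \<beta> n + \<theta> n * \<alpha> n
                  \<le> (1 - \<theta> (Suc n)) * \<beta> (Suc n) + \<theta> (Suc n) * \<alpha> (Suc n)"
    and C3v: "summable p" "\<mu>s \<longlonglongrightarrow> 0"
    and AB: "(L-lipschitz_on UNIV A \<and> strongly_monotone_op r A \<and> maximal_monotone B)
           \<or> (L-lipschitz_on UNIV A \<and> monotone_op A \<and> maximal_monotone B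
              \<and> strongly_monotone_setop r B)"
    and r_pos: "r > 0"
  shows "\<exists>q \<in> zeros_sum A B. x \<longlonglongrightarrow> q"
proof -
  obtain q where q: "q \<in> zeros_sum A B"
    using C1 by blast
  have Lip: "L-lipschitz_on UNIV A"
    using AB by blast
  have mono: "strongly_monotone_setop r (\<lambda>x. (\<lambda>u. A x + u) ` B x)"
    using AB by (intro strongly_monotone_sum) (auto simp: maximal_monotone_def)
  define \<kappa> where "\<kappa> = (1 + \<mu>) / 2"
  have \<kappa>: "\<mu> < \<kappa>" "0 \<le> \<kappa>" "\<kappa>\<^sup>2 < 1"
    using mu unfolding \<kappa>_def by (simp_all add: power_less_one_iff)
  obtain m N where "0 < m" and lam_ge: "\<forall>n\<ge>1. m \<le> lam n" and "1 \<le> N"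
    and contractive: "\<forall>n\<ge>N. lam n * norm (A (w n) - A (y n)) \<le> \<kappa> * norm (w n - y n)"
    using stepsize_rule_properties[OF Lip mu(1) \<kappa>(1) lam1 mus_nonneg p_nonneg C3v lam_def] .
  note conditions = inertial_conditions[OF eps C3i C3ii C3ii' C3iii]
  have "0 < \<theta>c"
    using C3iii by auto
  have params: "\<theta>c < \<theta> n" "\<theta> n \<le> 1 / (1 + \<epsilon>)" "0 \<le> \<beta> n" "1 \<le> n" if "N \<le> n" for n
    using C3ii C3iii \<open>1 \<le> N\<close> that by (auto intro: order_trans)
  define D where "D n = (1 - \<kappa>\<^sup>2) * norm (w n - y n) ^ 2 + 2 * lam n * r * norm (y n - q) ^ 2" for n
  have energy: "norm (x (Suc n) - q) ^ 2
      \<le> (1 + inertial_weight (\<theta> n) (\<alpha> n) (\<beta> n)) * norm (x n - q) ^ 2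
      - inertial_weight (\<theta> n) (\<alpha> n) (\<beta> n) * norm (x (n - 1) - q) ^ 2
      + inertial_coeff \<epsilon> (\<theta> n) (\<alpha> n) (\<beta> n) * norm (x n - x (n - 1)) ^ 2
      - \<epsilon> * (1 - \<beta> n) * norm (x (Suc n) - x (Suc n - 1)) ^ 2 - \<theta> n * D n" if "N \<le> n" for n
  proof -
    note p = params[OF that]
    have "0 \<le> lam n" "0 \<le> \<theta> n" "0 \<le> \<epsilon>"
      using lam_ge \<open>0 < m\<close> p(1,4) \<open>0 < \<theta>c\<close> eps by (auto intro: order.trans less_imp_le)
    moreover have "x (Suc n) = (1 - \<theta> n) *\<^sub>R (x n + \<beta> n *\<^sub>R (x n - x (n - 1)))
        + \<theta> n *\<^sub>R (y n - lam n *\<^sub>R (A (y n) - A (w n)))"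
      using x_def z_def p(4) by simp
    ultimately show ?thesis
      using algorithm_step_estimate[OF y_def[rule_format, OF p(4)] q mono _
          contractive[rule_format, OF that]
          \<kappa>(2) w_def[rule_format, OF p(4)] _ _ p(2) _ p(3)]
      unfolding D_def by simp
  qed
  have D_bounds: "\<theta>c * (1 - \<kappa>\<^sup>2) * norm (w n - y n) ^ 2 \<le> \<theta> n * D n"
    "\<theta>c * (2 * m * r) * norm (y n - q) ^ 2 \<le> \<theta> n * D n" "0 \<le> \<theta> n * D n" if "N \<le> n" for n
  proof -
    have "m \<le> lam n"
      using lam_ge params(4)[OF that] by simp
    then have "0 \<le> (1 - \<kappa>\<^sup>2) * norm (w n - y n) ^ 2" "0 \<le> 2 * m * r * norm (y n - q) ^ 2"
      and "2 * m * r * norm (y n - q) ^ 2 \<le> 2 * lam n * r * norm (y n - q) ^ 2"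
      using \<kappa>(3) r_pos \<open>0 < m\<close> by (auto intro!: mult_right_mono)
    then have "(1 - \<kappa>\<^sup>2) * norm (w n - y n) ^ 2 \<le> D n" "2 * m * r * norm (y n - q) ^ 2 \<le> D n"
      unfolding D_def by linarith+
    moreover have "0 \<le> \<theta>c" "\<theta>c \<le> \<theta> n"
      using params(1)[OF that] \<open>0 < \<theta>c\<close> by auto
    ultimately show "\<theta>c * (1 - \<kappa>\<^sup>2) * norm (w n - y n) ^ 2 \<le> \<theta> n * D n"
      "\<theta>c * (2 * m * r) * norm (y n - q) ^ 2 \<le> \<theta> n * D n" "0 \<le> \<theta> n * D n"
      using \<open>0 \<le> (1 - \<kappa>\<^sup>2) * norm (w n - y n) ^ 2\<close> \<open>0 \<le> 2 * m * r * norm (y n - q) ^ 2\<close>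
      by (auto simp: mult.assoc intro!: mult_mono)
  qed
  have weight_mono:
    "inertial_weight (\<theta> n) (\<alpha> n) (\<beta> n) \<le> inertial_weight (\<theta> (Suc n)) (\<alpha> (Suc n)) (\<beta> (Suc n))"
    if "N \<le> n" for n
    using C3iv params(4)[OF that] unfolding inertial_weight_def by simp
  note lims = inertial_recursion_tendsto_zero[OF energy weight_mono
      conditions(5)[OF params(4)] conditions(3)[OF params(4)] conditions(2) conditions(4)[OF params(4)]
      zero_le_power2 zero_le_power2 D_bounds(3) conditions(1)]
  show ?thesis
  proof (intro bexI[OF _ q] tendsto_of_inertial_residuals[OF _ _ _ w_def C3i])
    show "(\<lambda>n. x n - x (n - 1)) \<longlonglongrightarrow> 0"
      by (rule tendsto_zero_of_norm_sq_le[OF lims(1), where c = 1]) auto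
    have ev_wy: "eventually (\<lambda>n. \<theta>c * (1 - \<kappa>\<^sup>2) * norm (w n - y n) ^ 2 \<le> \<theta> n * D n) sequentially"
      using eventually_ge_at_top[of N] by eventually_elim (rule D_bounds(1))
    show "(\<lambda>n. w n - y n) \<longlonglongrightarrow> 0"
      by (rule tendsto_zero_of_norm_sq_le[OF lims(2) _ ev_wy]) (use \<open>0 < \<theta>c\<close> \<kappa>(3) in auto)
    have ev_yq: "eventually (\<lambda>n. \<theta>c * (2 * m * r) * norm (y n - q) ^ 2 \<le> \<theta> n * D n) sequentially"
      using eventually_ge_at_top[of N] by eventually_elim (rule D_bounds(2))
    show "(\<lambda>n. y n - q) \<longlonglongrightarrow> 0"
      by (rule tendsto_zero_of_norm_sq_le[OF lims(2) _ ev_yq]) (use \<open>0 < \<theta>c\<close> \<open>0 < m\<close> r_pos in auto)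
  qed
qed

end
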